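(* Let $G$ be a connected graph that is not complete. Then $\dim_{n\ell}(G)=1$ if and only if there exists a vertex $x\in V(G)$ such that for every integer $k$ with $0\le k\le \mathrm{diam}(G)$ the distance level $L_k(x)=\{u\in V(G): d_G(x,u)=k\}$ induces a complete subgraph of $G$.
   Context: Graphs are finite, simple and connected; $d_G(u,v)$ is the shortest-path distance and $\mathrm{diam}(G)$ the largest distance in $G$. A set $X\subseteq V(G)$ resolves two vertices $u,v$ if some $x\in X$ satisfies $d_G(u,x)\neq d_G(v,x)$. $X$ is a resolving set if it resolves every pair of distinct vertices; the metric dimension $\dim(G)$ is the minimum size of a resolving set. $X$ is a nonlocal resolving set if it resolves every pair of distinct non-adjacent vertices; the nonlocal metric dimension $\dim_{n\ell}(G)$ is the minimum size of a nonlocal resolving set (so $\dim_{n\ell}(K_n)=0$), and a nonlocal metric basis is a nonlocal resolving set of this minimum size. *)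

theory Defs
  imports Main
begin

definition simple_graph :: "'a set \<Rightarrow> ('a \<Rightarrow> 'a \<Rightarrow> bool) \<Rightarrow> bool" where
  "simple_graph V E \<longleftrightarrow> finite V \<and> V \<noteq> {} \<and>
     (\<forall>u v. E u v \<longrightarrow> u \<in> V \<and> v \<in> V) \<and>
     (\<forall>u v. E u v \<longrightarrow> E v u) \<and> (\<forall>u. \<not> E u u)"

definition is_walk :: "'a set \<Rightarrow> ('a \<Rightarrow> 'a \<Rightarrow> bool) \<Rightarrow> 'a list \<Rightarrow> bool" where
  "is_walk V E p \<longleftrightarrow> p \<noteq> [] \<and> set p \<subseteq> V \<and>
     (\<forall>i. Suc i < length p \<longrightarrow> E (p ! i) (p ! Suc i))"

definition walk_betw :: "'a set \<Rightarrow> ('a \<Rightarrow> 'a \<Rightarrow> bool) \<Rightarrow> 'a \<Rightarrow> nat \<Rightarrow> 'a \<Rightarrow> bool" where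
  "walk_betw V E u n v \<longleftrightarrow>
     (\<exists>p. is_walk V E p \<and> hd p = u \<and> last p = v \<and> length p = Suc n)"

definition connected_graph :: "'a set \<Rightarrow> ('a \<Rightarrow> 'a \<Rightarrow> bool) \<Rightarrow> bool" where
  "connected_graph V E \<longleftrightarrow> (\<forall>u\<in>V. \<forall>v\<in>V. \<exists>n. walk_betw V E u n v)"

text \<open>Shortest-path distance (meaningful in connected graphs).\<close>

definition dist :: "'a set \<Rightarrow> ('a \<Rightarrow> 'a \<Rightarrow> bool) \<Rightarrow> 'a \<Rightarrow> 'a \<Rightarrow> nat" where
  "dist V E u v = (LEAST n. walk_betw V E u n v)"

definition diam :: "'a set \<Rightarrow> ('a \<Rightarrow> 'a \<Rightarrow> bool) \<Rightarrow> nat" where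
  "diam V E = Max {dist V E u v | u v. u \<in> V \<and> v \<in> V}"

definition complete_graph :: "'a set \<Rightarrow> ('a \<Rightarrow> 'a \<Rightarrow> bool) \<Rightarrow> bool" where
  "complete_graph V E \<longleftrightarrow> (\<forall>u\<in>V. \<forall>v\<in>V. u \<noteq> v \<longrightarrow> E u v)"

definition resolves :: "'a set \<Rightarrow> ('a \<Rightarrow> 'a \<Rightarrow> bool) \<Rightarrow> 'a set \<Rightarrow> 'a \<Rightarrow> 'a \<Rightarrow> bool" where
  "resolves V E X u v \<longleftrightarrow> (\<exists>x\<in>X. dist V E u x \<noteq> dist V E v x)"

definition nonlocal_resolving_set :: "'a set \<Rightarrow> ('a \<Rightarrow> 'a \<Rightarrow> bool) \<Rightarrow> 'a set \<Rightarrow> bool" where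
  "nonlocal_resolving_set V E X \<longleftrightarrow> X \<subseteq> V \<and>
     (\<forall>u\<in>V. \<forall>v\<in>V. u \<noteq> v \<and> \<not> E u v \<longrightarrow> resolves V E X u v)"

definition nonlocal_metric_dim :: "'a set \<Rightarrow> ('a \<Rightarrow> 'a \<Rightarrow> bool) \<Rightarrow> nat" where
  "nonlocal_metric_dim V E = (LEAST k. \<exists>X. nonlocal_resolving_set V E X \<and> card X = k)"

definition level :: "'a set \<Rightarrow> ('a \<Rightarrow> 'a \<Rightarrow> bool) \<Rightarrow> 'a \<Rightarrow> nat \<Rightarrow> 'a set" where
  "level V E x k = {u \<in> V. dist V E x u = k}"

definition induces_complete :: "('a \<Rightarrow> 'a \<Rightarrow> bool) \<Rightarrow> 'a set \<Rightarrow> bool" where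
  "induces_complete E S \<longleftrightarrow> (\<forall>u\<in>S. \<forall>v\<in>S. u \<noteq> v \<longrightarrow> E u v)"

end

theory Submission
  imports Defs
begin

text \<open>A single vertex x resolves two vertices exactly when they lie in different
distance levels of x. Hence {x} is a nonlocal resolving set iff every level of x is a
clique, and levels beyond the diameter are empty. Since the graph is not complete,
the empty set resolves nothing, so the nonlocal metric dimension is 1 iff some
singleton is a nonlocal resolving set.\<close>

lemma is_walk_rev:
  assumes "simple_graph V E" "is_walk V E p"
  shows "is_walk V E (rev p)"
proof -
  have sym: "\<And>u v. E u v \<Longrightarrow> E v u" using assms(1) by (simp add: simple_graph_def)
  have "E (rev p ! i) (rev p ! Suc i)" if "Suc i < length p" for i
  proof -
    define j where "j = length p - Suc (Suc i)"
    have j: "Suc j < length p" "Suc j = length p - Suc i" using that by (auto simp: j_def)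
    have "E (p ! j) (p ! Suc j)" using assms(2) j(1) unfolding is_walk_def by blast
    moreover have "rev p ! i = p ! Suc j" using that j by (simp add: rev_nth)
    moreover have "rev p ! Suc i = p ! j" using that by (simp add: rev_nth j_def)
    ultimately show ?thesis using sym by simp
  qed
  then show ?thesis using assms(2) by (auto simp: is_walk_def)
qed

lemma walk_betw_sym:
  assumes "simple_graph V E"
  shows "walk_betw V E u n v \<longleftrightarrow> walk_betw V E v n u"
proof -
  have "walk_betw V E v n u" if uv: "walk_betw V E u n v" for u v
  proof -
    obtain p where p: "is_walk V E p" "hd p = u" "last p = v" "length p = Suc n"
      using uv unfolding walk_betw_def by blast
    have "p \<noteq> []" using p(1) by (simp add: is_walk_def)
    then show ?thesis unfolding walk_betw_def using p is_walk_rev[OF assms p(1)]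
      by (intro exI[of _ "rev p"]) (auto simp: hd_rev last_rev)
  qed
  then show ?thesis by blast
qed

lemma dist_sym:
  assumes "simple_graph V E"
  shows "dist V E u v = dist V E v u"
  unfolding dist_def using walk_betw_sym[OF assms] by simp

lemma dist_self:
  assumes "u \<in> V"
  shows "dist V E u u = 0"
  unfolding dist_def using assms
  by (intro Least_eq_0) (auto simp: walk_betw_def is_walk_def intro!: exI[of _ "[u]"])

lemma dist_eq_0_imp_eq:
  assumes "connected_graph V E" "u \<in> V" "v \<in> V" "dist V E u v = 0"
  shows "u = v"
proof -
  obtain n where "walk_betw V E u n v" using assms by (auto simp: connected_graph_def)
  then have "walk_betw V E u (dist V E u v) v" unfolding dist_def by (rule LeastI)
  then obtain p where p: "hd p = u" "last p = v" "length p = 1"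
    using assms(4) by (auto simp: walk_betw_def)
  then obtain a where "p = [a]" by (cases p) auto
  then show ?thesis using p by simp
qed

lemma dist_le_diam:
  assumes "simple_graph V E" "u \<in> V" "v \<in> V"
  shows "dist V E u v \<le> diam V E"
proof -
  have "{dist V E u v | u v. u \<in> V \<and> v \<in> V} = (\<lambda>(u, v). dist V E u v) ` (V \<times> V)"
    by auto
  then have "finite {dist V E u v | u v. u \<in> V \<and> v \<in> V}"
    using assms(1) by (simp add: simple_graph_def)
  then show ?thesis unfolding diam_def using assms by (intro Max_ge) auto
qed

lemma level_eq_empty_if_diam_less:
  assumes "simple_graph V E" "x \<in> V" "diam V E < k"
  shows "level V E x k = {}"
  using dist_le_diam[OF assms(1,2)] assms(3) by (fastforce simp: level_def)

lemma nonlocal_resolving_set_vertices: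
  assumes "connected_graph V E"
  shows "nonlocal_resolving_set V E V"
  unfolding nonlocal_resolving_set_def resolves_def
proof (intro conjI ballI impI)
  fix u v assume uv: "u \<in> V" "v \<in> V" "u \<noteq> v \<and> \<not> E u v"
  then have "dist V E v u \<noteq> 0" using dist_eq_0_imp_eq[OF assms uv(2) uv(1)] by auto
  then show "\<exists>x\<in>V. dist V E u x \<noteq> dist V E v x"
    using uv(1) dist_self[OF uv(1)] by metis
qed simp

lemma not_nonlocal_resolving_set_empty:
  assumes "\<not> complete_graph V E"
  shows "\<not> nonlocal_resolving_set V E {}"
  using assms by (auto simp: complete_graph_def nonlocal_resolving_set_def resolves_def)

lemma nonlocal_metric_dim_eq_1_iff:
  assumes "simple_graph V E" "connected_graph V E" "\<not> complete_graph V E"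
  shows "nonlocal_metric_dim V E = 1 \<longleftrightarrow> (\<exists>x\<in>V. nonlocal_resolving_set V E {x})"
proof -
  let ?P = "\<lambda>k. \<exists>X. nonlocal_resolving_set V E X \<and> card X = k"
  have "finite V" using assms(1) by (simp add: simple_graph_def)
  then have not_P0: "\<not> ?P 0"
    using not_nonlocal_resolving_set_empty[OF assms(3)]
    by (metis card_0_eq finite_subset nonlocal_resolving_set_def)
  show ?thesis
  proof
    assume dim: "nonlocal_metric_dim V E = 1"
    have "?P (nonlocal_metric_dim V E)" unfolding nonlocal_metric_dim_def
      using nonlocal_resolving_set_vertices[OF assms(2)] by (intro LeastI) blast
    then obtain X where "nonlocal_resolving_set V E X" "card X = 1" using dim by auto
    then show "\<exists>x\<in>V. nonlocal_resolving_set V E {x}"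
      by (auto simp: card_1_singleton_iff nonlocal_resolving_set_def)
  next
    assume "\<exists>x\<in>V. nonlocal_resolving_set V E {x}"
    then have "?P 1" by force
    then show "nonlocal_metric_dim V E = 1" unfolding nonlocal_metric_dim_def
      using not_P0 by (intro Least_equality) (auto simp: less_one)
  qed
qed

lemma nonlocal_resolving_set_singleton_iff:
  assumes "simple_graph V E" "x \<in> V"
  shows "nonlocal_resolving_set V E {x} \<longleftrightarrow> (\<forall>k. induces_complete E (level V E x k))"
proof -
  have "resolves V E {x} u v \<longleftrightarrow> dist V E x u \<noteq> dist V E x v" for u v
    using dist_sym[OF assms(1), of x] by (simp add: resolves_def)
  then show ?thesis
    using assms(2)
    unfolding nonlocal_resolving_set_def induces_complete_def level_def by blast
qed

theorem proposition2p1: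
  fixes V :: "'a set" and E :: "'a \<Rightarrow> 'a \<Rightarrow> bool"
  assumes "simple_graph V E" and "connected_graph V E" and "\<not> complete_graph V E"
  shows "nonlocal_metric_dim V E = 1 \<longleftrightarrow>
         (\<exists>x\<in>V. \<forall>k::nat. k \<le> diam V E \<longrightarrow> induces_complete E (level V E x k))"
proof -
  have "(\<forall>k. induces_complete E (level V E x k)) \<longleftrightarrow>
        (\<forall>k \<le> diam V E. induces_complete E (level V E x k))" if "x \<in> V" for x
    using level_eq_empty_if_diam_less[OF assms(1) that]
    by (metis empty_iff induces_complete_def not_le)
  then show ?thesis
    using nonlocal_metric_dim_eq_1_iff[OF assms] nonlocal_resolving_set_singleton_iff[OF assms(1)]
    by auto
qed

end
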